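(* Let $k$ be a commutative ring and $A$ a commutative $k$-algebra. If the homomorphism of graded $A$-algebras $\theta_{A/k}:\operatorname{gr}\operatorname{Diff}_{A/k}\to(\operatorname{Sym}\Omega_{A/k})^*_{gr}$ is surjective (hence an isomorphism), then $\operatorname{Ider}_k(A)=\operatorname{Der}_k(A)$.
   Context: $\operatorname{Diff}^{(n)}_{A/k}$: $k$-linear differential operators of order $\le n$ (order $0$ = multiplications by elements of $A$; $\varphi$ has order $\le i+1$ iff $[\varphi,a]=\varphi\circ a-a\circ\varphi$ has order $\le i$ for all $a$); $\operatorname{gr}\operatorname{Diff}_{A/k}$ is the associated graded commutative $A$-algebra, $\sigma_n$ the symbol. $(\operatorname{Sym}\Omega_{A/k})^*_{gr}=\bigoplus_n\operatorname{Hom}_A(\operatorname{Sym}^n\Omega_{A/k},A)$ with the shuffle product. $\theta_{A/k}=\bigoplus_n\theta_n$, where for $P\in\operatorname{Diff}^{(n)}_{A/k}$, $\theta_n(\sigma_n(P))$ is the $A$-linear form on $\operatorname{Sym}^n\Omega_{A/k}$ with $dx_1\cdots dx_n\mapsto\sum_{L\subset[n]}(-1)^{\sharp L}x_LP(x_{[n]\setminus L})$ ($x_L=\prod_{i\in L}x_i$); it is a well-defined injective homomorphism of graded $A$-algebras. $\operatorname{Ider}_k(A)$ is the set of $\delta\in\operatorname{Der}_k(A)$ for which there is an infinite sequence $(D_0=\mathrm{Id},D_1=\delta,D_2,\dots)$ of $k$-linear maps $A\to A$ with $D_i(xy)=\sum_{r+s=i}D_r(x)D_s(y)$ (a Hasse–Schmidt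 derivation). *)

theory Defs
  imports Main "HOL-Library.Multiset"
begin

text \<open>A commutative k-algebra A: a commutative ring A (type 'a) together with
  its structure map phi : k -> A, a unital ring homomorphism from the commutative ring k.\<close>

definition alg_struct :: "('k::comm_ring_1 \<Rightarrow> 'a::comm_ring_1) \<Rightarrow> bool" where
  "alg_struct phi \<longleftrightarrow> phi 1 = 1 \<and> (\<forall>c d. phi (c + d) = phi c + phi d)
      \<and> (\<forall>c d. phi (c * d) = phi c * phi d)"

definition klin :: "('k::comm_ring_1 \<Rightarrow> 'a::comm_ring_1) \<Rightarrow> ('a \<Rightarrow> 'a) \<Rightarrow> bool" where
  "klin phi D \<longleftrightarrow> (\<forall>x y. D (x + y) = D x + D y) \<and> (\<forall>c x. D (phi c * x) = phi c * D x)"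

fun diffop :: "('k::comm_ring_1 \<Rightarrow> 'a::comm_ring_1) \<Rightarrow> nat \<Rightarrow> ('a \<Rightarrow> 'a) \<Rightarrow> bool" where
  "diffop phi 0 P \<longleftrightarrow> (\<exists>a. P = (\<lambda>x. a * x))"
| "diffop phi (Suc n) P \<longleftrightarrow> klin phi P \<and> (\<forall>a. diffop phi n (\<lambda>x. P (a * x) - a * P x))"

definition kder :: "('k::comm_ring_1 \<Rightarrow> 'a::comm_ring_1) \<Rightarrow> ('a \<Rightarrow> 'a) \<Rightarrow> bool" where
  "kder phi D \<longleftrightarrow> klin phi D \<and> (\<forall>x y. D (x * y) = x * D y + y * D x)"

definition ider :: "('k::comm_ring_1 \<Rightarrow> 'a::comm_ring_1) \<Rightarrow> ('a \<Rightarrow> 'a) \<Rightarrow> bool" where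
  "ider phi \<delta> \<longleftrightarrow> kder phi \<delta> \<and>
     (\<exists>D :: nat \<Rightarrow> 'a \<Rightarrow> 'a. D 0 = id \<and> D 1 = \<delta> \<and> (\<forall>i. klin phi (D i)) \<and>
        (\<forall>i x y. D i (x * y) = (\<Sum>r\<le>i. D r x * D (i - r) y)))"

text \<open>A-linear forms on Sym^n Omega_{A/k}, described through the universal property of
  Kaehler differentials and of the symmetric power: a form l corresponds to the map
  (x_1,...,x_n) |-> l(dx_1 ... dx_n), which is a symmetric map A^n -> A that is a
  k-derivation in each argument (and every such map arises from a unique form).\<close>
definition sym_multider :: "('k::comm_ring_1 \<Rightarrow> 'a::comm_ring_1) \<Rightarrow> nat \<Rightarrow> ('a list \<Rightarrow> 'a) \<Rightarrow> bool" where
  "sym_multider phi n f \<longleftrightarrow>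
     (\<forall>xs ys. length xs = n \<longrightarrow> mset ys = mset xs \<longrightarrow> f ys = f xs) \<and>
     (\<forall>xs i. length xs = n \<longrightarrow> i < n \<longrightarrow> kder phi (\<lambda>y. f (xs[i := y])))"

text \<open>theta_n(sigma_n(P)) evaluated on dx_1 ... dx_n.\<close>
definition theta_val :: "('a::comm_ring_1 \<Rightarrow> 'a) \<Rightarrow> 'a list \<Rightarrow> 'a" where
  "theta_val P xs = (\<Sum>L\<in>Pow {0..<length xs}.
      (-1) ^ card L * (\<Prod>i\<in>L. xs ! i) * P (\<Prod>i\<in>{0..<length xs} - L. xs ! i))"

text \<open>Surjectivity of theta_{A/k} (degreewise): every A-linear form on Sym^n Omega
  is theta_n(sigma_n(P)) for some differential operator P of order at most n.\<close>
definition theta_surj :: "('k::comm_ring_1 \<Rightarrow> 'a::comm_ring_1) \<Rightarrow> bool" where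
  "theta_surj phi \<longleftrightarrow> (\<forall>n f. sym_multider phi n f \<longrightarrow>
      (\<exists>P. diffop phi n P \<and> (\<forall>xs. length xs = n \<longrightarrow> theta_val P xs = f xs)))"

end

theory Submission
  imports Defs "HOL-Combinatorics.List_Permutation" "HOL-Computational_Algebra.Formal_Power_Series"
begin

text \<open>A derivation d is extended step by step to a Hasse--Schmidt derivation
  D_0 = id, D_1 = d, D_2, ... with D_i of order at most i. Given D_0, ..., D_m, the part
  e(x,y) = \<Sum>_{1 \<le> r \<le> m} D_r(x) D_{m+1-r}(y) of the Leibniz rule in degree m+1 is, by
  associativity of the truncated series \<Sum>_{i \<le> m} D_i t^i, a symmetric Hochschild 2-cocycle,
  and a suitable D_{m+1} is exactly an operator of order m+1 whose coboundary is -e.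
  A symmetric cocycle e whose partial maps e(x,-) have order n \<ge> 1 defines, through the
  symbols of these partial maps, a symmetric multiderivation in n+1 arguments, i.e. a form
  on Sym^{n+1} \<Omega>. Surjectivity of \<theta> realises it as the symbol of an operator R of order n+1,
  and subtracting the coboundary of R lowers the order of the cocycle. In order 0 the
  cocycle is b x y, the coboundary of multiplication by -b.\<close>

lemma diffop0_iff: "diffop phi 0 P \<longleftrightarrow> (\<exists>a. \<forall>x. P x = a * x)"
  by (auto simp: fun_eq_iff)

declare diffop.simps(1)[simp del]

lemma diffop_klin: "diffop phi n P \<Longrightarrow> klin phi P"
  by (cases n) (auto simp: diffop0_iff klin_def algebra_simps)

lemma diffop_Suc: "diffop phi n P \<Longrightarrow> diffop phi (Suc n) P"
proof (induction n arbitrary: P)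
  case 0
  then obtain a where "\<And>x. P x = a * x" by (auto simp: diffop0_iff)
  then show ?case by (auto simp: klin_def algebra_simps diffop0_iff intro: exI[of _ 0])
next
  case (Suc n)
  then show ?case by auto
qed

lemma diffop_mono: "diffop phi n P \<Longrightarrow> n \<le> m \<Longrightarrow> diffop phi m P"
proof (induction m)
  case (Suc m)
  then show ?case by (metis diffop_Suc le_Suc_eq)
qed simp

lemma diffop_cong: "diffop phi n P \<Longrightarrow> (\<And>x. P x = Q x) \<Longrightarrow> diffop phi n Q"
  by (metis ext)

lemma diffop_mult: "diffop phi n (\<lambda>x. a * x)"
  using diffop_mono[of phi 0 "\<lambda>x. a * x" n] by (auto simp: diffop0_iff)

lemma diffop_add: "diffop phi n P \<Longrightarrow> diffop phi n Q \<Longrightarrow> diffop phi n (\<lambda>x. P x + Q x)"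
proof (induction n arbitrary: P Q)
  case 0
  then obtain a b where "\<And>x. P x = a * x" "\<And>x. Q x = b * x" by (auto simp: diffop0_iff)
  then show ?case by (auto simp: algebra_simps diffop0_iff intro: exI[of _ "a + b"])
next
  case (Suc n)
  have "diffop phi n (\<lambda>x. (P (a * x) - a * P x) + (Q (a * x) - a * Q x))" for a
    using Suc by simp
  then have "diffop phi n (\<lambda>x. P (a * x) + Q (a * x) - a * (P x + Q x))" for a
    by (rule diffop_cong) (simp add: algebra_simps)
  moreover have "klin phi (\<lambda>x. P x + Q x)"
    using Suc.prems diffop_klin by (simp add: klin_def algebra_simps)
  ultimately show ?case by simp
qed

lemma diffop_cmult: "diffop phi n P \<Longrightarrow> diffop phi n (\<lambda>x. c * P x)"
proof (induction n arbitrary: P)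
  case 0
  then obtain a where "\<And>x. P x = a * x" by (auto simp: diffop0_iff)
  then show ?case by (auto simp: algebra_simps diffop0_iff intro: exI[of _ "c * a"])
next
  case (Suc n)
  have "diffop phi n (\<lambda>x. c * P (a * x) - a * (c * P x))" for a
  proof -
    have "diffop phi n (\<lambda>x. c * (P (a * x) - a * P x))" using Suc by simp
    then show ?thesis by (rule diffop_cong) (simp add: algebra_simps)
  qed
  moreover have "klin phi (\<lambda>x. c * P x)"
    using Suc.prems diffop_klin by (simp add: klin_def algebra_simps)
  ultimately show ?case by simp
qed

lemma diffop_minus: "diffop phi n P \<Longrightarrow> diffop phi n (\<lambda>x. - P x)"
  using diffop_cmult[of phi n P "-1"] by simp

lemma diffop_diff: "diffop phi n P \<Longrightarrow> diffop phi n Q \<Longrightarrow> diffop phi n (\<lambda>x. P x - Q x)"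
  using diffop_add[of phi n P "\<lambda>x. - Q x"] diffop_minus[of phi n Q] by simp

lemma diffop_sum:
  "finite S \<Longrightarrow> (\<And>r. r \<in> S \<Longrightarrow> diffop phi n (G r)) \<Longrightarrow> diffop phi n (\<lambda>y. \<Sum>r\<in>S. G r y)"
proof (induction S rule: finite_induct)
  case empty
  then show ?case using diffop_mult[of phi n 0] by simp
next
  case (insert x F)
  then show ?case using diffop_add[of phi n "G x"] by simp
qed

lemma theta_val_Nil: "theta_val P [] = P 1"
  by (simp add: theta_val_def)

lemma theta_val_snoc: "theta_val P (ys @ [z]) = theta_val (\<lambda>y. P (z * y) - z * P y) ys"
proof -
  let ?n = "length ys"
  let ?x = "ys @ [z]"
  define T where "T L = (-1)^card L * (\<Prod>i\<in>L. ?x!i) * P (\<Prod>i\<in>{0..<Suc ?n} - L. ?x!i)" for L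
  have "theta_val P ?x = (\<Sum>L\<in>Pow {0..<Suc ?n}. T L)" by (simp add: theta_val_def T_def)
  also have "Pow {0..<Suc ?n} = Pow {0..<?n} \<union> insert ?n ` Pow {0..<?n}"
    by (simp add: atLeast0_lessThan_Suc Pow_insert)
  also have "sum T \<dots> = sum T (Pow {0..<?n}) + sum T (insert ?n ` Pow {0..<?n})"
    by (rule sum.union_disjoint) auto
  also have "sum T (insert ?n ` Pow {0..<?n}) = sum (T \<circ> insert ?n) (Pow {0..<?n})"
    by (rule sum.reindex, rule inj_onI) (metis PowD atLeastLessThan_iff insert_ident less_irrefl subsetD)
  also have "sum T (Pow {0..<?n}) + sum (T \<circ> insert ?n) (Pow {0..<?n})
      = (\<Sum>L\<in>Pow {0..<?n}. T L + T (insert ?n L))" by (simp add: sum.distrib)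
  also have "\<dots> = theta_val (\<lambda>y. P (z * y) - z * P y) ys"
    unfolding theta_val_def
  proof (rule sum.cong)
    fix L assume L: "L \<in> Pow {0..<?n}"
    then have fin: "finite L" and nL: "?n \<notin> L" by (auto intro: finite_subset)
    have p1: "(\<Prod>i\<in>L. ?x!i) = (\<Prod>i\<in>L. ys!i)"
      by (rule prod.cong) (use L in \<open>auto simp: nth_append\<close>)
    have p2: "(\<Prod>i\<in>{0..<?n} - L. ?x!i) = (\<Prod>i\<in>{0..<?n} - L. ys!i)"
      by (rule prod.cong) (auto simp: nth_append)
    have c1: "{0..<Suc ?n} - L = insert ?n ({0..<?n} - L)" using L by auto
    have c2: "{0..<Suc ?n} - insert ?n L = {0..<?n} - L" by auto
    have "T L = (-1)^card L * (\<Prod>i\<in>L. ys!i) * P (z * (\<Prod>i\<in>{0..<?n} - L. ys!i))"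
      unfolding T_def c1 using p1 p2 by simp
    moreover have "T (insert ?n L)
        = - ((-1)^card L * (z * (\<Prod>i\<in>L. ys!i)) * P (\<Prod>i\<in>{0..<?n} - L. ys!i))"
      unfolding T_def c2 using p1 p2 fin nL by simp
    ultimately show "T L + T (insert ?n L) = (-1)^card L * (\<Prod>i\<in>L. ys!i) *
        (P (z * (\<Prod>i\<in>{0..<length ys} - L. ys!i)) - z * P (\<Prod>i\<in>{0..<length ys} - L. ys!i))"
      by (simp add: algebra_simps)
  qed simp
  finally show ?thesis .
qed

lemma theta_val_add: "theta_val (\<lambda>x. P x + Q x) xs = theta_val P xs + theta_val Q xs"
  by (simp add: theta_val_def sum.distrib[symmetric] algebra_simps)

lemma theta_val_diff: "theta_val (\<lambda>x. P x - Q x) xs = theta_val P xs - theta_val Q xs"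
  by (simp add: theta_val_def sum_subtractf[symmetric] algebra_simps)

lemma theta_val_cmult: "theta_val (\<lambda>x. c * P x) xs = c * theta_val P xs"
  by (simp add: theta_val_def sum_distrib_left algebra_simps)

lemma theta_val_perm:
  assumes "mset xs = mset ys"
  shows "theta_val P xs = theta_val P ys"
proof -
  have len: "length xs = length ys" using assms mset_eq_length by blast
  let ?n = "length ys"
  obtain f where bij: "bij_betw f {..<length xs} {..<length ys}"
    and fx: "\<forall>i<length xs. xs ! i = ys ! (f i)"
    using permutation_Ex_bij[OF assms] by blast
  have bij': "bij_betw f {0..<?n} {0..<?n}" using bij len by (simp add: atLeast0LessThan)
  then have inj: "inj_on f {0..<?n}" using bij_betw_imp_inj_on by blast
  define g where "g L = (-1)^card L * (\<Prod>i\<in>L. ys!i) * P (\<Prod>i\<in>{0..<?n} - L. ys!i)" for L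
  have "theta_val P ys = sum g (Pow {0..<?n})" by (simp add: theta_val_def g_def)
  also have "\<dots> = (\<Sum>L\<in>Pow {0..<?n}. g (f ` L))"
    by (rule sum.reindex_bij_betw[symmetric]) (rule bij_betw_image_Pow[OF bij'])
  also have "\<dots> = theta_val P xs"
    unfolding theta_val_def len
  proof (rule sum.cong)
    fix L assume L: "L \<in> Pow {0..<?n}"
    have injL: "inj_on f L" and injC: "inj_on f ({0..<?n} - L)"
      using L inj inj_on_subset by blast+
    have im: "{0..<?n} - f ` L = f ` ({0..<?n} - L)"
      using bij' L inj by (auto simp: bij_betw_def inj_on_image_set_diff)
    have "(\<Prod>i\<in>f ` L. ys!i) = (\<Prod>i\<in>L. xs!i)"
      using prod.reindex[OF injL, of "\<lambda>i. ys!i"] fx L len by (auto intro!: prod.cong)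
    moreover have "(\<Prod>i\<in>{0..<?n} - f ` L. ys!i) = (\<Prod>i\<in>{0..<?n} - L. xs!i)"
      unfolding im using prod.reindex[OF injC, of "\<lambda>i. ys!i"] fx len by (auto intro!: prod.cong)
    ultimately show "g (f ` L) = (-1)^card L * (\<Prod>i\<in>L. xs!i) * P (\<Prod>i\<in>{0..<?n} - L. xs!i)"
      unfolding g_def using card_image[OF injL] by simp
  qed simp
  finally show ?thesis by simp
qed

lemma theta_val_eq_0: "diffop phi n P \<Longrightarrow> n < length xs \<Longrightarrow> theta_val P xs = 0"
proof (induction xs arbitrary: n P rule: rev_induct)
  case (snoc z ys)
  show ?case
  proof (cases n)
    case 0
    then obtain a where "\<And>x. P x = a * x" using snoc.prems by (auto simp: diffop0_iff)
    then have "(\<lambda>y. P (z * y) - z * P y) = (\<lambda>_. 0)" by (simp add: fun_eq_iff algebra_simps)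
    then show ?thesis unfolding theta_val_snoc by (simp add: theta_val_def)
  next
    case (Suc m)
    then show ?thesis
      using snoc.IH[of m "\<lambda>y. P (z * y) - z * P y"] snoc.prems by (simp add: theta_val_snoc)
  qed
qed simp

lemma diffop_lower_order:
  "diffop phi (Suc j) P \<Longrightarrow> (\<And>ys. length ys = Suc j \<Longrightarrow> theta_val P ys = 0) \<Longrightarrow> diffop phi j P"
proof (induction j arbitrary: P)
  case 0
  have "P x = P 1 * x" for x
    using 0(2)[of "[x]"] theta_val_snoc[of P "[]" x] by (simp add: theta_val_Nil algebra_simps)
  then show ?case unfolding diffop0_iff by blast
next
  case (Suc j)
  have "diffop phi j (\<lambda>x. P (a * x) - a * P x)" for a
    using Suc.prems by (intro Suc.IH) (auto simp: theta_val_snoc[symmetric])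
  with Suc.prems(1) show ?case by simp
qed

lemma theta_val_kder_snoc:
  assumes P: "diffop phi (Suc n) P" and len: "length zs = n"
  shows "kder phi (\<lambda>y. theta_val P (zs @ [y]))"
proof -
  have add: "\<And>x y. P (x + y) = P x + P y" and sc: "\<And>c x. P (phi c * x) = phi c * P x"
    using diffop_klin[OF P] by (auto simp: klin_def)
  define C where "C y = (\<lambda>w. P (y * w) - y * P w)" for y
  have eq: "(\<lambda>y. theta_val P (zs @ [y])) = (\<lambda>y. theta_val (C y) zs)"
    by (simp add: theta_val_snoc C_def)
  have "theta_val (C (y + y')) zs = theta_val (C y) zs + theta_val (C y') zs" for y y'
  proof -
    have "C (y + y') = (\<lambda>w. C y w + C y' w)"
      by (simp add: C_def fun_eq_iff algebra_simps add)
    then show ?thesis by (simp add: theta_val_add)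
  qed
  moreover have "theta_val (C (phi c * y)) zs = phi c * theta_val (C y) zs" for c y
  proof -
    have "C (phi c * y) = (\<lambda>w. phi c * C y w)"
      by (simp add: C_def fun_eq_iff algebra_simps sc[symmetric] mult.assoc)
    then show ?thesis by (simp add: theta_val_cmult)
  qed
  moreover have "theta_val (C (y * y')) zs = y * theta_val (C y') zs + y' * theta_val (C y) zs"
    for y y'
  proof -
    have "C (y * y') = (\<lambda>w. (C y (y' * w) - y' * C y w) + (y' * C y w + y * C y' w))"
      by (simp add: C_def fun_eq_iff algebra_simps)
    then have "theta_val (C (y * y')) zs
        = theta_val (C y) (zs @ [y']) + (y' * theta_val (C y) zs + y * theta_val (C y') zs)"
      by (simp only: theta_val_add theta_val_cmult theta_val_snoc)
    moreover have "theta_val (C y) (zs @ [y']) = 0"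
      using P len by (intro theta_val_eq_0[of phi n]) (simp_all add: C_def)
    ultimately show ?thesis by (simp add: algebra_simps)
  qed
  ultimately show ?thesis unfolding eq kder_def klin_def by auto
qed

lemma theta_val_kder_update:
  assumes P: "diffop phi n P" and len: "length xs = n" and i: "i < n"
  shows "kder phi (\<lambda>y. theta_val P (xs[i := y]))"
proof -
  obtain m where n: "n = Suc m" using i by (cases n) auto
  define zs where "zs = take i xs @ drop (Suc i) xs"
  have "mset (xs[i := y]) = mset (zs @ [y])" for y
  proof -
    have "mset xs = mset (take i xs @ xs ! i # drop (Suc i) xs)"
      using id_take_nth_drop[of i xs] i len by simp
    then have "mset xs - {#xs ! i#} = mset zs" by (simp add: zs_def)
    then show ?thesis using mset_update[of i xs y] i len by simp
  qed
  then have "(\<lambda>y. theta_val P (xs[i := y])) = (\<lambda>y. theta_val P (zs @ [y]))"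
    by (intro ext theta_val_perm)
  moreover have "length zs = m" using len i n by (simp add: zs_def)
  ultimately show ?thesis using theta_val_kder_snoc[of phi m P zs] P n by simp
qed

definition coboundary :: "('a::comm_ring_1 \<Rightarrow> 'a) \<Rightarrow> 'a \<Rightarrow> 'a \<Rightarrow> 'a" where
  "coboundary Q x y = Q (x * y) - x * Q y - Q x * y"

definition sym_cocycle :: "('a::comm_ring_1 \<Rightarrow> 'a \<Rightarrow> 'a) \<Rightarrow> bool" where
  "sym_cocycle \<epsilon> \<longleftrightarrow> (\<forall>x y. \<epsilon> x y = \<epsilon> y x) \<and>
     (\<forall>a b c. a * \<epsilon> b c - \<epsilon> (a * b) c + \<epsilon> a (b * c) - \<epsilon> a b * c = 0)"

lemma coboundary_add: "coboundary (\<lambda>y. P y + Q y) = (\<lambda>x y. coboundary P x y + coboundary Q x y)"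
  by (simp add: coboundary_def fun_eq_iff algebra_simps)

lemma sym_cocycle_diff_coboundary:
  assumes "sym_cocycle \<epsilon>"
  shows "sym_cocycle (\<lambda>x y. \<epsilon> x y - coboundary R x y)"
  unfolding sym_cocycle_def
proof (intro conjI allI)
  fix x y
  show "\<epsilon> x y - coboundary R x y = \<epsilon> y x - coboundary R y x"
    using assms by (simp add: sym_cocycle_def coboundary_def mult.commute)
next
  fix a b c
  have "a * (\<epsilon> b c - coboundary R b c) - (\<epsilon> (a * b) c - coboundary R (a * b) c)
      + (\<epsilon> a (b * c) - coboundary R a (b * c)) - (\<epsilon> a b - coboundary R a b) * c
    = a * \<epsilon> b c - \<epsilon> (a * b) c + \<epsilon> a (b * c) - \<epsilon> a b * c"
    by (simp add: coboundary_def algebra_simps)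
  also have "\<dots> = 0" using assms unfolding sym_cocycle_def by blast
  finally show "a * (\<epsilon> b c - coboundary R b c) - (\<epsilon> (a * b) c - coboundary R (a * b) c)
      + (\<epsilon> a (b * c) - coboundary R a (b * c)) - (\<epsilon> a b - coboundary R a b) * c = 0" .
qed

lemma coboundary_eq: "coboundary R x = (\<lambda>y. (R (x * y) - x * R y) - R x * y)"
  by (simp add: coboundary_def fun_eq_iff)

lemma diffop_coboundary: "diffop phi (Suc n) R \<Longrightarrow> diffop phi n (coboundary R x)"
  unfolding coboundary_eq by (rule diffop_diff[OF _ diffop_mult]) simp

lemma theta_val_coboundary:
  assumes "ys \<noteq> []"
  shows "theta_val (coboundary R x) ys = theta_val R (ys @ [x])"
proof -
  have "theta_val (\<lambda>y. R x * y) ys = 0"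
    using assms by (intro theta_val_eq_0[OF diffop_mult[of phi 0]]) simp
  then show ?thesis unfolding coboundary_eq theta_val_diff theta_val_snoc by simp
qed

lemma sym_cocycle_swap:
  "sym_cocycle \<epsilon> \<Longrightarrow> \<epsilon> x (y * z) - y * \<epsilon> x z = \<epsilon> y (x * z) - x * \<epsilon> y z"
proof -
  assume \<epsilon>: "sym_cocycle \<epsilon>"
  then have "x * \<epsilon> y z - \<epsilon> (x * y) z + \<epsilon> x (y * z) - \<epsilon> x y * z = 0"
    and "y * \<epsilon> x z - \<epsilon> (y * x) z + \<epsilon> y (x * z) - \<epsilon> y x * z = 0"
    and "\<epsilon> y x = \<epsilon> x y"
    unfolding sym_cocycle_def by blast+
  then show ?thesis by (simp add: algebra_simps)
qed

text \<open>The form dx_1 ... dx_n dx \<mapsto> \<theta>_n(\<sigma>_n(e(x,-)))(dx_1 ... dx_n); the cocycle identity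
  makes it symmetric in the last argument as well.\<close>

definition cocycle_form :: "('a::comm_ring_1 \<Rightarrow> 'a \<Rightarrow> 'a) \<Rightarrow> 'a list \<Rightarrow> 'a" where
  "cocycle_form \<epsilon> xs = theta_val (\<epsilon> (last xs)) (butlast xs)"

lemma cocycle_form_snoc: "cocycle_form \<epsilon> (zs @ [x]) = theta_val (\<epsilon> x) zs"
  by (simp add: cocycle_form_def)

lemma cocycle_form_perm:
  assumes \<epsilon>: "sym_cocycle \<epsilon>" and xs: "mset ys = mset xs" "xs \<noteq> []"
  shows "cocycle_form \<epsilon> ys = cocycle_form \<epsilon> xs"
proof -
  obtain bx x where xs_eq: "xs = bx @ [x]" using xs(2) by (cases xs rule: rev_cases) auto
  obtain by' y where ys_eq: "ys = by' @ [y]"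
    using xs by (cases ys rule: rev_cases) auto
  have m: "add_mset y (mset by') = add_mset x (mset bx)" using xs(1) xs_eq ys_eq by simp
  show ?thesis
  proof (cases "x = y")
    case True
    then have "mset by' = mset bx" using m by simp
    then show ?thesis unfolding xs_eq ys_eq cocycle_form_snoc True by (rule theta_val_perm)
  next
    case False
    have "y \<in># add_mset x (mset bx)" unfolding m[symmetric] by simp
    then have "y \<in> set bx" using False by simp
    define zs where "zs = remove1 y bx"
    have mb: "mset bx = mset (zs @ [y])" using perm_remove[OF \<open>y \<in> set bx\<close>] by (simp add: zs_def)
    then have mby: "mset by' = mset (zs @ [x])" using m by (simp add: add_mset_commute)
    have "cocycle_form \<epsilon> xs = theta_val (\<epsilon> x) (zs @ [y])"
      unfolding xs_eq cocycle_form_snoc using mb by (rule theta_val_perm)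
    also have "\<dots> = theta_val (\<lambda>w. \<epsilon> x (y * w) - y * \<epsilon> x w) zs"
      by (rule theta_val_snoc)
    also have "(\<lambda>w. \<epsilon> x (y * w) - y * \<epsilon> x w) = (\<lambda>w. \<epsilon> y (x * w) - x * \<epsilon> y w)"
      using sym_cocycle_swap[OF \<epsilon>] by auto
    also have "theta_val \<dots> zs = theta_val (\<epsilon> y) (zs @ [x])"
      by (rule theta_val_snoc[symmetric])
    also have "\<dots> = cocycle_form \<epsilon> ys"
      unfolding ys_eq cocycle_form_snoc using mby by (rule theta_val_perm[symmetric])
    finally show ?thesis by simp
  qed
qed

lemma cocycle_form_kder_update:
  assumes \<epsilon>: "sym_cocycle \<epsilon>" and ord: "\<forall>x. diffop phi (Suc j) (\<epsilon> x)"
    and len: "length xs = Suc (Suc j)" and i: "i \<le> Suc j"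
  shows "kder phi (\<lambda>y. cocycle_form \<epsilon> (xs[i := y]))"
proof -
  have slot: "kder phi (\<lambda>y. cocycle_form \<epsilon> (xs[i := y]))"
    if xs_i: "length xs = Suc (Suc j)" "i < Suc j" for xs i
  proof -
    obtain bx x where xs: "xs = bx @ [x]" using xs_i(1) by (cases xs rule: rev_cases) auto
    then have "(\<lambda>y. cocycle_form \<epsilon> (xs[i := y])) = (\<lambda>y. theta_val (\<epsilon> x) (bx[i := y]))"
      using xs_i by (simp add: list_update_append1 cocycle_form_snoc)
    then show ?thesis using theta_val_kder_update[of phi "Suc j" "\<epsilon> x" bx i] ord xs_i xs by simp
  qed
  show ?thesis
  proof (cases "i = Suc j")
    case True
    obtain a rest where xs: "xs = a # rest" using len by (cases xs) auto
    define ws where "ws = a # rest[j := a]"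
    have "cocycle_form \<epsilon> (xs[Suc j := y]) = cocycle_form \<epsilon> (ws[0 := y])" for y
      using len by (intro cocycle_form_perm[OF \<epsilon>])
        (simp_all add: xs ws_def mset_update add_mset_commute)
    moreover have "length ws = Suc (Suc j)" using len xs by (simp add: ws_def)
    ultimately show ?thesis using slot[of ws 0] True by simp
  next
    case False
    then show ?thesis using slot len i by simp
  qed
qed

lemma sym_multider_cocycle_form:
  assumes \<epsilon>: "sym_cocycle \<epsilon>" and ord: "\<forall>x. diffop phi (Suc j) (\<epsilon> x)"
  shows "sym_multider phi (Suc (Suc j)) (cocycle_form \<epsilon>)"
  unfolding sym_multider_def
proof (intro conjI allI impI)
  fix xs ys :: "'a list"
  assume "length xs = Suc (Suc j)" "mset ys = mset xs"
  then show "cocycle_form \<epsilon> ys = cocycle_form \<epsilon> xs" by (intro cocycle_form_perm[OF \<epsilon>]) auto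
next
  fix xs :: "'a list" and i
  assume "length xs = Suc (Suc j)" "i < Suc (Suc j)"
  then show "kder phi (\<lambda>y. cocycle_form \<epsilon> (xs[i := y]))"
    by (intro cocycle_form_kder_update[OF \<epsilon> ord]) auto
qed

lemma sym_cocycle_reduce_order:
  fixes phi :: "'k::comm_ring_1 \<Rightarrow> 'a::comm_ring_1" and \<epsilon> :: "'a \<Rightarrow> 'a \<Rightarrow> 'a"
  assumes "theta_surj phi" and \<epsilon>: "sym_cocycle \<epsilon>" and ord: "\<forall>x. diffop phi (Suc j) (\<epsilon> x)"
  obtains R where "diffop phi (Suc (Suc j)) R"
    and "\<forall>x. diffop phi j (\<lambda>y. \<epsilon> x y - coboundary R x y)"
proof -
  obtain R where R: "diffop phi (Suc (Suc j)) R"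
    and R_form: "\<And>xs. length xs = Suc (Suc j) \<Longrightarrow> theta_val R xs = cocycle_form \<epsilon> xs"
    using assms(1)[unfolded theta_surj_def, rule_format, OF sym_multider_cocycle_form[OF \<epsilon> ord]]
    by blast
  have "diffop phi j (\<lambda>y. \<epsilon> x y - coboundary R x y)" for x
  proof (rule diffop_lower_order)
    show "diffop phi (Suc j) (\<lambda>y. \<epsilon> x y - coboundary R x y)"
      using ord diffop_coboundary[OF R] by (intro diffop_diff) auto
    fix ys :: "'a list" assume "length ys = Suc j"
    have "theta_val (\<lambda>y. \<epsilon> x y - coboundary R x y) ys
        = theta_val (\<epsilon> x) ys - theta_val (coboundary R x) ys"
      by (rule theta_val_diff)
    also have "theta_val (coboundary R x) ys = theta_val R (ys @ [x])"
      using \<open>length ys = Suc j\<close> by (intro theta_val_coboundary) auto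
    also have "\<dots> = theta_val (\<epsilon> x) ys"
      using \<open>length ys = Suc j\<close> by (simp add: R_form cocycle_form_snoc)
    finally show "theta_val (\<lambda>y. \<epsilon> x y - coboundary R x y) ys = 0" by simp
  qed
  with R show ?thesis using that by blast
qed

lemma sym_cocycle_eq_coboundary:
  fixes phi :: "'k::comm_ring_1 \<Rightarrow> 'a::comm_ring_1" and \<epsilon> :: "'a \<Rightarrow> 'a \<Rightarrow> 'a"
  assumes "theta_surj phi"
  shows "sym_cocycle \<epsilon> \<Longrightarrow> \<forall>x. diffop phi j (\<epsilon> x) \<Longrightarrow>
    \<exists>Q. diffop phi (Suc j) Q \<and> \<epsilon> = coboundary Q"
proof (induction j arbitrary: \<epsilon>)
  case 0
  have \<epsilon>_x: "\<epsilon> x y = \<epsilon> x 1 * y" for x y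
  proof -
    obtain a where "\<forall>y. \<epsilon> x y = a * y" using "0.prems"(2) by (auto simp: diffop0_iff)
    then show ?thesis by simp
  qed
  define b where "b = \<epsilon> 1 1"
  have "\<epsilon> x 1 = b * x" for x
  proof -
    have "\<epsilon> x 1 = \<epsilon> 1 x" using "0.prems"(1) by (simp add: sym_cocycle_def)
    also have "\<dots> = b * x" unfolding b_def by (rule \<epsilon>_x)
    finally show ?thesis .
  qed
  then have "\<epsilon> x y = b * x * y" for x y
    using \<epsilon>_x[of x y] by simp
  then have "\<epsilon> = coboundary (\<lambda>y. - b * y)"
    by (simp add: coboundary_def fun_eq_iff algebra_simps)
  moreover have "diffop phi (Suc 0) (\<lambda>y. - b * y)" by (rule diffop_mult)
  ultimately show ?case by blast
next
  case (Suc j)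
  obtain R where R: "diffop phi (Suc (Suc j)) R"
    and ord': "\<forall>x. diffop phi j (\<lambda>y. \<epsilon> x y - coboundary R x y)"
    using sym_cocycle_reduce_order[OF assms Suc.prems] .
  obtain Q where Q: "diffop phi (Suc j) Q" and "(\<lambda>x y. \<epsilon> x y - coboundary R x y) = coboundary Q"
    using Suc.IH[OF sym_cocycle_diff_coboundary[OF Suc.prems(1)] ord'] by blast
  then have "\<epsilon> = coboundary (\<lambda>y. Q y + R y)"
    unfolding coboundary_add by (simp add: fun_eq_iff algebra_simps)
  moreover have "diffop phi (Suc (Suc j)) (\<lambda>y. Q y + R y)"
    using diffop_add[OF diffop_Suc[OF Q] R] .
  ultimately show ?case by (intro exI[of _ "\<lambda>y. Q y + R y"] conjI)
qed

definition hs_upto :: "('k::comm_ring_1 \<Rightarrow> 'a::comm_ring_1) \<Rightarrow> nat \<Rightarrow> (nat \<Rightarrow> 'a \<Rightarrow> 'a) \<Rightarrow> bool" where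
  "hs_upto phi m D \<longleftrightarrow> D 0 = id \<and> (\<forall>i\<le>m. diffop phi i (D i)) \<and>
     (\<forall>i\<le>m. \<forall>x y. D i (x * y) = (\<Sum>r\<le>i. D r x * D (i - r) y))"

definition hs_obstruction :: "nat \<Rightarrow> (nat \<Rightarrow> 'a \<Rightarrow> 'a) \<Rightarrow> 'a \<Rightarrow> 'a \<Rightarrow> 'a::comm_ring_1" where
  "hs_obstruction m D x y = (\<Sum>r\<in>{1..m}. D r x * D (Suc m - r) y)"

lemma fps_nth_mult_Suc_eq_if_agree:
  fixes f g h :: "'a::comm_ring_1 fps"
  assumes "\<forall>i\<le>m. fps_nth f i = fps_nth g i"
  shows "fps_nth (f * h) (Suc m) = fps_nth (g * h) (Suc m) + (fps_nth f (Suc m) - fps_nth g (Suc m)) * fps_nth h 0"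
proof -
  have "(\<Sum>i=0..m. fps_nth f i * fps_nth h (Suc m - i)) = (\<Sum>i=0..m. fps_nth g i * fps_nth h (Suc m - i))"
    using assms by (intro sum.cong) auto
  then show ?thesis unfolding fps_mult_nth sum.atLeast0_atMost_Suc
    by (simp add: algebra_simps)
qed

lemma hs_obstruction_sym_cocycle:
  assumes "hs_upto phi m D"
  shows "sym_cocycle (\<lambda>x y. - hs_obstruction m D x y)"
proof -
  have D0: "D 0 = id" and leibniz: "\<And>i x y. i \<le> m \<Longrightarrow> D i (x * y) = (\<Sum>r\<le>i. D r x * D (i - r) y)"
    using assms by (auto simp: hs_upto_def)
  define T where "T x = Abs_fps (\<lambda>i. if i \<le> m then D i x else 0)" for x
  have T_nth: "fps_nth (T x) i = (if i \<le> m then D i x else 0)" for x i by (simp add: T_def)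
  have obstruction: "fps_nth (T x * T y) (Suc m) = hs_obstruction m D x y" for x y
    unfolding fps_mult_nth hs_obstruction_def
    by (rule sum.mono_neutral_cong_right) (auto simp: T_nth)
  have low: "\<forall>i\<le>m. fps_nth (T x * T y) i = fps_nth (T (x * y)) i" for x y
    using leibniz by (auto simp: fps_mult_nth T_nth atLeast0AtMost intro!: sum.cong)
  have T0: "fps_nth (T z) 0 = z" and T_Suc: "fps_nth (T z) (Suc m) = 0" for z
    using D0 by (simp_all add: T_nth)
  have assoc: "hs_obstruction m D (x * y) z + hs_obstruction m D x y * z
      = hs_obstruction m D (y * z) x + hs_obstruction m D y z * x" for x y z
  proof -
    have "hs_obstruction m D (x * y) z + hs_obstruction m D x y * z = fps_nth (T x * T y * T z) (Suc m)"
      using fps_nth_mult_Suc_eq_if_agree[OF low[of x y], of "T z"] by (simp add: obstruction T0 T_Suc)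
    also have "T x * T y * T z = T y * T z * T x" by (simp add: ac_simps)
    also have "fps_nth \<dots> (Suc m) = hs_obstruction m D (y * z) x + hs_obstruction m D y z * x"
      using fps_nth_mult_Suc_eq_if_agree[OF low[of y z], of "T x"] by (simp add: obstruction T0 T_Suc)
    finally show ?thesis .
  qed
  have sym: "hs_obstruction m D x y = hs_obstruction m D y x" for x y
    using obstruction[of x y] obstruction[of y x] by (simp add: mult.commute)
  show ?thesis
    unfolding sym_cocycle_def
  proof (intro conjI allI)
    fix a b c
    show "a * - hs_obstruction m D b c - - hs_obstruction m D (a * b) c
        + - hs_obstruction m D a (b * c) - - hs_obstruction m D a b * c = 0"
      using assoc[of a b c] sym[of a "b * c"] by (simp add: algebra_simps)
  qed (use sym in simp)
qed

lemma hs_obstruction_diffop: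
  assumes "hs_upto phi m D"
  shows "diffop phi m (hs_obstruction m D x)"
proof -
  have "diffop phi m (D (Suc m - r))" if "r \<in> {1..m}" for r
    using diffop_mono[of phi "Suc m - r" "D (Suc m - r)" m] assms that by (auto simp: hs_upto_def)
  then have "diffop phi m (\<lambda>y. \<Sum>r\<in>{1..m}. D r x * D (Suc m - r) y)"
    by (intro diffop_sum diffop_cmult) auto
  then show ?thesis by (simp add: hs_obstruction_def[abs_def])
qed

lemma hs_leibniz_Suc:
  assumes "D 0 = id"
  shows "(\<Sum>r\<le>Suc m. (D(Suc m := E)) r x * (D(Suc m := E)) (Suc m - r) y)
    = x * E y + hs_obstruction m D x y + E x * y"
proof -
  let ?D = "D(Suc m := E)"
  let ?g = "\<lambda>r. ?D r x * ?D (Suc m - r) y"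
  have "(\<Sum>r\<le>Suc m. ?g r) = ?g 0 + (\<Sum>r=Suc 0..m. ?g r) + ?g (Suc m)"
    unfolding sum.atMost_Suc atMost_atLeast0 by (subst sum.atLeast_Suc_atMost) simp_all
  also have "(\<Sum>r=Suc 0..m. ?g r) = hs_obstruction m D x y"
    unfolding hs_obstruction_def by (intro sum.cong) auto
  finally show ?thesis using assms by simp
qed

lemma hs_upto_extend:
  assumes "theta_surj phi" and D: "hs_upto phi m D"
  shows "\<exists>E. hs_upto phi (Suc m) (D(Suc m := E))"
proof -
  obtain Q where Q: "diffop phi (Suc m) Q" and eq: "(\<lambda>x y. - hs_obstruction m D x y) = coboundary Q"
    using sym_cocycle_eq_coboundary[OF assms(1) hs_obstruction_sym_cocycle[OF D]]
      hs_obstruction_diffop[OF D] diffop_minus by blast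
  define E where "E = (\<lambda>y. - Q y)"
  have E: "diffop phi (Suc m) E" unfolding E_def using Q by (rule diffop_minus)
  have E_leibniz: "E (x * y) = x * E y + hs_obstruction m D x y + E x * y" for x y
    using fun_cong[OF fun_cong[OF eq, of x], of y] by (simp add: E_def coboundary_def algebra_simps)
  have "hs_upto phi (Suc m) (D(Suc m := E))"
    unfolding hs_upto_def
  proof (intro conjI allI impI)
    show "(D(Suc m := E)) 0 = id" using D by (simp add: hs_upto_def)
  next
    fix i assume "i \<le> Suc m"
    then show "diffop phi i ((D(Suc m := E)) i)"
      using D E by (cases "i = Suc m") (auto simp: hs_upto_def)
  next
    fix i x y assume i: "i \<le> Suc m"
    show "(D(Suc m := E)) i (x * y) = (\<Sum>r\<le>i. (D(Suc m := E)) r x * (D(Suc m := E)) (i - r) y)"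
    proof (cases "i = Suc m")
      case True
      then show ?thesis using hs_leibniz_Suc[of D m E] D E_leibniz by (simp add: hs_upto_def)
    next
      case False
      then have "i \<le> m" using i by simp
      then have "(\<Sum>r\<le>i. (D(Suc m := E)) r x * (D(Suc m := E)) (i - r) y)
          = (\<Sum>r\<le>i. D r x * D (i - r) y)"
        by (intro sum.cong) auto
      then show ?thesis using D \<open>i \<le> m\<close> False by (simp add: hs_upto_def)
    qed
  qed
  then show ?thesis by blast
qed

lemma hs_upto_limit:
  fixes D\<^sub>1 :: "nat \<Rightarrow> 'a::comm_ring_1 \<Rightarrow> 'a"
  assumes start: "hs_upto phi 1 D\<^sub>1"
    and extend: "\<And>m D. hs_upto phi m D \<Longrightarrow> \<exists>E. hs_upto phi (Suc m) (D(Suc m := E))"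
  shows "\<exists>D :: nat \<Rightarrow> 'a \<Rightarrow> 'a. D 0 = id \<and> D 1 = D\<^sub>1 1 \<and> (\<forall>i. klin phi (D i)) \<and>
    (\<forall>i x y. D i (x * y) = (\<Sum>r\<le>i. D r x * D (i - r) y))"
proof -
  obtain F where F: "\<And>m D. hs_upto phi m D \<Longrightarrow> hs_upto phi (Suc m) (D(Suc m := F m D))"
    using extend by metis
  define S where "S = rec_nat D\<^sub>1 (\<lambda>m D. D(Suc (Suc m) := F (Suc m) D))"
  have S_Suc: "S (Suc m) = (S m)(Suc (Suc m) := F (Suc m) (S m))" for m
    by (simp add: S_def)
  have S_hs: "hs_upto phi (Suc m) (S m)" for m
  proof (induction m)
    case 0
    then show ?case using start by (simp add: S_def)
  next
    case (Suc m)
    then show ?case unfolding S_Suc by (rule F)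
  qed
  have S_stable: "r \<le> Suc m \<Longrightarrow> S (m + k) r = S m r" for r m k
    by (induction k) (auto simp: S_Suc)
  define D where "D i = S i i" for i
  have S_D: "r \<le> i \<Longrightarrow> S i r = D r" for r i
    using S_stable[of r r "i - r"] by (simp add: D_def)
  have "D i (x * y) = (\<Sum>r\<le>i. D r x * D (i - r) y)" for i x y
  proof -
    have "D i (x * y) = (\<Sum>r\<le>i. S i r x * S i (i - r) y)"
      using S_hs[of i] by (simp add: hs_upto_def D_def)
    also have "\<dots> = (\<Sum>r\<le>i. D r x * D (i - r) y)"
      by (intro sum.cong) (simp_all add: S_D)
    finally show ?thesis .
  qed
  moreover have "klin phi (D i)" for i
  proof -
    have "diffop phi i (S i i)" using S_hs[of i] by (simp add: hs_upto_def)
    then show ?thesis unfolding D_def by (rule diffop_klin)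
  qed
  moreover have "D 0 = id" "D 1 = D\<^sub>1 1"
    using start S_stable[of 1 0 1] S_D[of 0 0] by (simp_all add: D_def S_def hs_upto_def)
  ultimately show ?thesis by blast
qed

lemma hs_upto_one:
  assumes "kder phi \<delta>"
  shows "hs_upto phi 1 ((\<lambda>_. \<delta>)(0 := id))"
proof -
  have leibniz: "\<delta> (x * y) = x * \<delta> y + y * \<delta> x" for x y
    using assms by (simp add: kder_def)
  have "diffop phi 0 (\<lambda>x. \<delta> (a * x) - a * \<delta> x)" for a
    unfolding diffop0_iff by (rule exI[of _ "\<delta> a"]) (simp add: leibniz algebra_simps)
  then have "diffop phi 1 \<delta>"
    using assms by (simp add: kder_def)
  moreover have "diffop phi 0 id"
    unfolding diffop0_iff by (rule exI[of _ 1]) simp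
  ultimately show ?thesis
    by (auto simp: hs_upto_def le_Suc_eq leibniz algebra_simps)
qed

theorem mainTheorem13:
  fixes phi :: "'k::comm_ring_1 \<Rightarrow> 'a::comm_ring_1"
  assumes "alg_struct phi"
    and "theta_surj phi"
  shows "{\<delta>. ider phi \<delta>} = {\<delta>. kder phi \<delta>}"
proof (intro set_eqI iffI; simp)
  fix \<delta> assume "ider phi \<delta>"
  then show "kder phi \<delta>" by (simp add: ider_def)
next
  fix \<delta> assume "kder phi \<delta>"
  then show "ider phi \<delta>"
    using hs_upto_limit[OF hs_upto_one[OF \<open>kder phi \<delta>\<close>] hs_upto_extend[OF assms(2)]]
    unfolding ider_def by (simp del: One_nat_def)
qed

end
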